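(* Let $M$ be a finite $\Sigma$-Rickart right $R$-module and $S=\mathrm{End}_R(M)$. Then (i) $S$ is a right semi-hereditary ring; (ii) $S$ is a right coherent ring; (iii) every finitely $M$-generated submodule of $M$ is $M$-coherent.
   Context: $M^{(n)}$ is the direct sum of $n$ copies of $M$. $M$ is Rickart if $\ker\varphi$ is a direct summand of $M$ for all $\varphi\in\mathrm{End}_R(M)$; $M$ is finite $\Sigma$-Rickart if $M^{(n)}$ is Rickart for all $n>0$. A ring is right semi-hereditary if every finitely generated right ideal is projective, and right coherent if every finitely generated right ideal is finitely presented. A module $N$ is finitely $M$-generated if there is an epimorphism $M^{(n)}\to N$ for some $n>0$; such an $N$ is $M$-coherent if for every $n>0$ and every homomorphism $\rho:M^{(n)}\to N$, $\ker\rho$ is finitely $M$-generated. *)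

theory Defs
  imports Main "HOL-Library.Function_Algebras"
begin

text \<open>A ring is given by a carrier Rc inside an additive group type, a multiplication
  and a unit.\<close>

definition rmod :: "'r::ab_group_add set \<Rightarrow> ('r \<Rightarrow> 'r \<Rightarrow> 'r) \<Rightarrow> 'r
    \<Rightarrow> ('a::ab_group_add \<Rightarrow> 'r \<Rightarrow> 'a) \<Rightarrow> 'a set \<Rightarrow> bool" where
  "rmod Rc mul one act C \<longleftrightarrow>
     0 \<in> C \<and> (\<forall>x\<in>C. \<forall>y\<in>C. x + y \<in> C) \<and> (\<forall>x\<in>C. - x \<in> C) \<and>
     (\<forall>x\<in>C. \<forall>r\<in>Rc. act x r \<in> C) \<and>
     (\<forall>x\<in>C. \<forall>y\<in>C. \<forall>r\<in>Rc. act (x + y) r = act x r + act y r) \<and>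
     (\<forall>x\<in>C. \<forall>r\<in>Rc. \<forall>s\<in>Rc. act x (r + s) = act x r + act x s \<and>
                             act x (mul r s) = act (act x r) s) \<and>
     (\<forall>x\<in>C. act x one = x)"

definition rhom :: "'r set \<Rightarrow> ('a::ab_group_add \<Rightarrow> 'r \<Rightarrow> 'a) \<Rightarrow> 'a set
    \<Rightarrow> ('b::ab_group_add \<Rightarrow> 'r \<Rightarrow> 'b) \<Rightarrow> 'b set \<Rightarrow> ('a \<Rightarrow> 'b) \<Rightarrow> bool" where
  "rhom Rc act1 C1 act2 C2 f \<longleftrightarrow>
     (\<forall>x\<in>C1. f x \<in> C2) \<and> (\<forall>x\<in>C1. \<forall>y\<in>C1. f (x + y) = f x + f y) \<and>
     (\<forall>x\<in>C1. \<forall>r\<in>Rc. f (act1 x r) = act2 (f x) r)"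

definition submod :: "'r::ab_group_add set \<Rightarrow> ('r \<Rightarrow> 'r \<Rightarrow> 'r) \<Rightarrow> 'r
    \<Rightarrow> ('a::ab_group_add \<Rightarrow> 'r \<Rightarrow> 'a) \<Rightarrow> 'a set \<Rightarrow> 'a set \<Rightarrow> bool" where
  "submod Rc mul one act N C \<longleftrightarrow> N \<subseteq> C \<and> rmod Rc mul one act N"

definition kernel :: "'a set \<Rightarrow> ('a \<Rightarrow> 'b::zero) \<Rightarrow> 'a set" where
  "kernel C f = {x \<in> C. f x = 0}"

definition dsummand :: "'r::ab_group_add set \<Rightarrow> ('r \<Rightarrow> 'r \<Rightarrow> 'r) \<Rightarrow> 'r
    \<Rightarrow> ('a::ab_group_add \<Rightarrow> 'r \<Rightarrow> 'a) \<Rightarrow> 'a set \<Rightarrow> 'a set \<Rightarrow> bool" where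
  "dsummand Rc mul one act C N \<longleftrightarrow> submod Rc mul one act N C \<and>
     (\<exists>K. submod Rc mul one act K C \<and> N \<inter> K = {0} \<and> C = {a + b |a b. a \<in> N \<and> b \<in> K})"

text \<open>Endomorphisms, normalised to be 0 outside the carrier (so that End is a ring
  under pointwise addition and composition).\<close>
definition endos :: "'r set \<Rightarrow> ('a::ab_group_add \<Rightarrow> 'r \<Rightarrow> 'a) \<Rightarrow> 'a set \<Rightarrow> ('a \<Rightarrow> 'a) set" where
  "endos Rc act C = {f. rhom Rc act C act C f \<and> (\<forall>x. x \<notin> C \<longrightarrow> f x = 0)}"

definition end_one :: "'a::zero set \<Rightarrow> 'a \<Rightarrow> 'a" where
  "end_one C = (\<lambda>x. if x \<in> C then x else 0)"

definition rickart :: "'r::ab_group_add set \<Rightarrow> ('r \<Rightarrow> 'r \<Rightarrow> 'r) \<Rightarrow> 'r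
    \<Rightarrow> ('a::ab_group_add \<Rightarrow> 'r \<Rightarrow> 'a) \<Rightarrow> 'a set \<Rightarrow> bool" where
  "rickart Rc mul one act C \<longleftrightarrow> rmod Rc mul one act C \<and>
     (\<forall>f\<in>endos Rc act C. dsummand Rc mul one act C (kernel C f))"

text \<open>M^(n): n-tuples (indices < n) of elements of M, componentwise action.\<close>
definition dsum :: "nat \<Rightarrow> 'a::zero set \<Rightarrow> (nat \<Rightarrow> 'a) set" where
  "dsum n C = {v. (\<forall>i<n. v i \<in> C) \<and> (\<forall>i\<ge>n. v i = 0)}"

definition dact :: "('a \<Rightarrow> 'r \<Rightarrow> 'a) \<Rightarrow> (nat \<Rightarrow> 'a) \<Rightarrow> 'r \<Rightarrow> (nat \<Rightarrow> 'a)" where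
  "dact act v r = (\<lambda>i. act (v i) r)"

definition fin_sigma_rickart :: "'r::ab_group_add set \<Rightarrow> ('r \<Rightarrow> 'r \<Rightarrow> 'r) \<Rightarrow> 'r
    \<Rightarrow> ('a::ab_group_add \<Rightarrow> 'r \<Rightarrow> 'a) \<Rightarrow> 'a set \<Rightarrow> bool" where
  "fin_sigma_rickart Rc mul one act C \<longleftrightarrow>
     (\<forall>n>0. rickart Rc mul one (dact act) (dsum n C))"

definition fgen :: "'r set \<Rightarrow> ('a::ab_group_add \<Rightarrow> 'r \<Rightarrow> 'a) \<Rightarrow> 'a set \<Rightarrow> bool" where
  "fgen Rc act C \<longleftrightarrow> (\<exists>xs. set xs \<subseteq> C \<and>
     C = {\<Sum>i<length xs. act (xs ! i) (rs i) |rs. \<forall>i<length xs. rs i \<in> Rc})"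

definition free_mod :: "'r::ab_group_add set \<Rightarrow> 'i set \<Rightarrow> ('i \<Rightarrow> 'r) set" where
  "free_mod Rc X = {v. (\<forall>i\<in>X. v i \<in> Rc) \<and> (\<forall>i. i \<notin> X \<longrightarrow> v i = 0) \<and> finite {i. v i \<noteq> 0}}"

definition free_act :: "('r \<Rightarrow> 'r \<Rightarrow> 'r) \<Rightarrow> 'i set \<Rightarrow> ('i \<Rightarrow> 'r::zero) \<Rightarrow> 'r \<Rightarrow> ('i \<Rightarrow> 'r)" where
  "free_act mul X v r = (\<lambda>i. if i \<in> X then mul (v i) r else 0)"

text \<open>Projective: a direct summand of a free module (index sets may be taken in the
  element type, since a module is a quotient of the free module on its own elements).\<close>
definition projective :: "'r::ab_group_add set \<Rightarrow> ('r \<Rightarrow> 'r \<Rightarrow> 'r) \<Rightarrow> 'r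
    \<Rightarrow> ('a::ab_group_add \<Rightarrow> 'r \<Rightarrow> 'a) \<Rightarrow> 'a set \<Rightarrow> bool" where
  "projective Rc mul one act C \<longleftrightarrow> rmod Rc mul one act C \<and>
     (\<exists>(X::'a set) \<pi> \<iota>.
        rhom Rc (free_act mul X) (free_mod Rc X) act C \<pi> \<and> \<pi> ` free_mod Rc X = C \<and>
        rhom Rc act C (free_act mul X) (free_mod Rc X) \<iota> \<and> (\<forall>x\<in>C. \<pi> (\<iota> x) = x))"

definition fin_pres :: "'r::ab_group_add set \<Rightarrow> ('r \<Rightarrow> 'r \<Rightarrow> 'r) \<Rightarrow> 'r
    \<Rightarrow> ('a::ab_group_add \<Rightarrow> 'r \<Rightarrow> 'a) \<Rightarrow> 'a set \<Rightarrow> bool" where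
  "fin_pres Rc mul one act C \<longleftrightarrow> rmod Rc mul one act C \<and>
     (\<exists>(n::nat) \<pi>. rhom Rc (free_act mul {..<n}) (free_mod Rc {..<n}) act C \<pi> \<and>
        \<pi> ` free_mod Rc {..<n} = C \<and>
        fgen Rc (free_act mul {..<n}) (kernel (free_mod Rc {..<n}) \<pi>))"

definition right_ideal :: "'r::ab_group_add set \<Rightarrow> ('r \<Rightarrow> 'r \<Rightarrow> 'r) \<Rightarrow> 'r \<Rightarrow> 'r set \<Rightarrow> bool" where
  "right_ideal Rc mul one I \<longleftrightarrow> I \<subseteq> Rc \<and> rmod Rc mul one mul I"

definition right_semihereditary :: "'r::ab_group_add set \<Rightarrow> ('r \<Rightarrow> 'r \<Rightarrow> 'r) \<Rightarrow> 'r \<Rightarrow> bool" where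
  "right_semihereditary Rc mul one \<longleftrightarrow>
     (\<forall>I. right_ideal Rc mul one I \<and> fgen Rc mul I \<longrightarrow> projective Rc mul one mul I)"

definition right_coherent :: "'r::ab_group_add set \<Rightarrow> ('r \<Rightarrow> 'r \<Rightarrow> 'r) \<Rightarrow> 'r \<Rightarrow> bool" where
  "right_coherent Rc mul one \<longleftrightarrow>
     (\<forall>I. right_ideal Rc mul one I \<and> fgen Rc mul I \<longrightarrow> fin_pres Rc mul one mul I)"

definition fin_M_gen :: "'r set \<Rightarrow> ('a::ab_group_add \<Rightarrow> 'r \<Rightarrow> 'a) \<Rightarrow> 'a set
    \<Rightarrow> ('b::ab_group_add \<Rightarrow> 'r \<Rightarrow> 'b) \<Rightarrow> 'b set \<Rightarrow> bool" where
  "fin_M_gen Rc actM M actN N \<longleftrightarrow>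
     (\<exists>n>0. \<exists>\<sigma>. rhom Rc (dact actM) (dsum n M) actN N \<sigma> \<and> \<sigma> ` dsum n M = N)"

definition M_coherent :: "'r set \<Rightarrow> ('a::ab_group_add \<Rightarrow> 'r \<Rightarrow> 'a) \<Rightarrow> 'a set
    \<Rightarrow> ('b::ab_group_add \<Rightarrow> 'r \<Rightarrow> 'b) \<Rightarrow> 'b set \<Rightarrow> bool" where
  "M_coherent Rc actM M actN N \<longleftrightarrow> fin_M_gen Rc actM M actN N \<and>
     (\<forall>n>0. \<forall>\<rho>. rhom Rc (dact actM) (dsum n M) actN N \<rho> \<longrightarrow>
        fin_M_gen Rc actM M (dact actM) (kernel (dsum n M) \<rho>))"

end

theory Submission
  imports Defs
begin

text \<open>Let \<open>x\<^sub>1, \<dots>, x\<^sub>n\<close> generate a right ideal \<open>I\<close> of \<open>S = End(M)\<close>. Since \<open>M\<^sup>n\<close> is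
  Rickart, the kernel of the row map \<open>(x\<^sub>1 \<dots> x\<^sub>n) : M\<^sup>n \<rightarrow> M\<close> is a direct summand of
  \<open>M\<^sup>n\<close>; let \<open>e\<close> be the projection onto a complement along it. Composing with \<open>e\<close>
  is an \<open>S\<close>-linear endomorphism \<open>q\<close> of \<open>S\<^sup>n = Hom(M, M\<^sup>n)\<close> that vanishes on the kernel
  of the presentation \<open>\<pi> : S\<^sup>n \<rightarrow> I\<close>, \<open>\<pi> s = \<Sum> x\<^sub>i s\<^sub>i\<close>, and satisfies \<open>\<pi> \<circ> q = \<pi>\<close>.
  Hence \<open>\<pi>\<close> splits: \<open>I\<close> is a direct summand of \<open>S\<^sup>n\<close>, so projective, and
  \<open>ker \<pi> = (1 - q)(S\<^sup>n)\<close> is generated by the images of the unit vectors, so \<open>I\<close> is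
  finitely presented. Part (iii) is the same observation for an arbitrary homomorphism
  \<open>M\<^sup>n \<rightarrow> N \<subseteq> M\<close>: its kernel is a direct summand, hence an image of \<open>M\<^sup>n\<close>.\<close>

section \<open>Modules, direct summands and finite \<open>\<Sigma>\<close>-Rickart modules\<close>

lemma sum_apply: "(sum f A) x = (\<Sum>i\<in>A. f i x)"
  by (induction A rule: infinite_finite_induct) auto

lemma rmod_diff_mem:
  "rmod Rc mul one act C \<Longrightarrow> x \<in> C \<Longrightarrow> y \<in> C \<Longrightarrow> x - y \<in> C"
  unfolding rmod_def by (metis diff_conv_add_uminus)

lemma rmod_sum_mem:
  "rmod Rc mul one act C \<Longrightarrow> (\<And>i. i \<in> A \<Longrightarrow> g i \<in> C) \<Longrightarrow> sum g A \<in> C"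
  by (induction A rule: infinite_finite_induct) (auto simp: rmod_def)

lemma rmod_act_zero:
  assumes "rmod Rc mul one act C" "r \<in> Rc"
  shows "act 0 r = 0"
proof -
  have "act (0 + 0) r = act 0 r + act 0 r" using assms unfolding rmod_def by blast
  then show ?thesis by simp
qed

lemma rmod_act_diff:
  assumes "rmod Rc mul one act C" "x \<in> C" "y \<in> C" "r \<in> Rc"
  shows "act (x - y) r = act x r - act y r"
proof -
  have "act ((x - y) + y) r = act (x - y) r + act y r"
    using assms rmod_diff_mem[OF assms(1-3)] unfolding rmod_def by blast
  then show ?thesis by (simp add: algebra_simps)
qed

lemma rmod_act_sum:
  "rmod Rc mul one act C \<Longrightarrow> (\<And>i. i \<in> A \<Longrightarrow> g i \<in> C) \<Longrightarrow> r \<in> Rc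
   \<Longrightarrow> act (sum g A) r = (\<Sum>i\<in>A. act (g i) r)"
proof (induction A rule: infinite_finite_induct)
  case (insert x F)
  then have "sum g F \<in> C" by (intro rmod_sum_mem[of Rc mul one act]) auto
  with insert show ?case unfolding rmod_def by simp
qed (auto simp: rmod_act_zero)

lemma rhom_zero:
  assumes "rmod Rc mul one act1 C1" "rhom Rc act1 C1 act2 C2 f"
  shows "f 0 = 0"
proof -
  have "f (0 + 0) = f 0 + f 0" using assms unfolding rmod_def rhom_def by blast
  then show ?thesis by simp
qed

lemma rhom_diff:
  assumes "rmod Rc mul one act1 C1" "rhom Rc act1 C1 act2 C2 f" "x \<in> C1" "y \<in> C1"
  shows "f (x - y) = f x - f y"
proof -
  have "f ((x - y) + y) = f (x - y) + f y"
    using assms rmod_diff_mem[OF assms(1,3,4)] unfolding rhom_def by blast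
  then show ?thesis by (simp add: algebra_simps)
qed

lemma dsum_mem_iff: "v \<in> dsum n C \<longleftrightarrow> (\<forall>i<n. v i \<in> C) \<and> (\<forall>i\<ge>n. v i = 0)"
  unfolding dsum_def by simp

lemma dsum_coord: "w \<in> dsum n C \<Longrightarrow> 0 \<in> C \<Longrightarrow> w i \<in> C"
  unfolding dsum_def by (cases "i < n") auto

lemma rmod_dsum:
  assumes m: "rmod Rc mul one act C"
  shows "rmod Rc mul one (dact act) (dsum n C)"
proof -
  have comp: "v i \<in> C" if "v \<in> dsum n C" for v i
    using that m dsum_coord unfolding rmod_def by blast
  have "dact act v r \<in> dsum n C" if "v \<in> dsum n C" "r \<in> Rc" for v r
    using that m rmod_act_zero[OF m] unfolding dsum_mem_iff dact_def rmod_def by auto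
  moreover have "0 \<in> dsum n C" using m unfolding dsum_mem_iff rmod_def by auto
  moreover have "v + w \<in> dsum n C" "- v \<in> dsum n C"
    if "v \<in> dsum n C" "w \<in> dsum n C" for v w
    using that m unfolding dsum_mem_iff rmod_def by auto
  ultimately show ?thesis
    using m comp unfolding rmod_def dact_def by (simp add: fun_eq_iff)
qed

lemma dsummand_retraction:
  assumes m: "rmod Rc mul one act C" and d: "dsummand Rc mul one act C A"
  shows "\<exists>p. rhom Rc act C act C p \<and> p ` C = A \<and> (\<forall>a\<in>A. p a = a)"
proof -
  from d obtain B where A: "submod Rc mul one act A C" and B: "submod Rc mul one act B C"
    and AB: "A \<inter> B = {0}" and C: "C = {a + b |a b. a \<in> A \<and> b \<in> B}"
    unfolding dsummand_def by blast
  have mA: "rmod Rc mul one act A" and sA: "A \<subseteq> C" using A unfolding submod_def by auto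
  have mB: "rmod Rc mul one act B" using B unfolding submod_def by auto
  have unique: "a = a'" if "a \<in> A" "a' \<in> A" "v - a \<in> B" "v - a' \<in> B" for v a a'
  proof -
    have "a - a' \<in> A" using rmod_diff_mem[OF mA] that by blast
    moreover have "a - a' = (v - a') - (v - a)" by simp
    then have "a - a' \<in> B" using rmod_diff_mem[OF mB] that by metis
    ultimately have "a - a' \<in> A \<inter> B" by blast
    with AB show ?thesis by simp
  qed
  define p where "p v = (THE a. a \<in> A \<and> v - a \<in> B)" for v
  have p: "p v \<in> A \<and> v - p v \<in> B" if v: "v \<in> C" for v
  proof -
    obtain a b where "a \<in> A" "b \<in> B" "v = a + b" using v C by blast
    then have "\<exists>!a. a \<in> A \<and> v - a \<in> B" using unique by force
    then show ?thesis unfolding p_def by (rule theI')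
  qed
  have p_eqI: "p v = a" if "v \<in> C" "a \<in> A" "v - a \<in> B" for v a
    using unique p[OF that(1)] that(2,3) by blast
  have "rhom Rc act C act C p"
    unfolding rhom_def
  proof (intro conjI ballI)
    fix x assume "x \<in> C" then show "p x \<in> C" using p sA by auto
  next
    fix x y assume xy: "x \<in> C" "y \<in> C"
    have "x + y \<in> C" "p x + p y \<in> A" using m mA p xy unfolding rmod_def by simp_all
    moreover have "(x + y) - (p x + p y) = (x - p x) + (y - p y)" by simp
    then have "(x + y) - (p x + p y) \<in> B" using mB p xy unfolding rmod_def by metis
    ultimately show "p (x + y) = p x + p y" by (rule p_eqI)
  next
    fix x r assume xr: "x \<in> C" "r \<in> Rc"
    have "act x r \<in> C" "act (p x) r \<in> A" using m mA p xr unfolding rmod_def by simp_all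
    moreover have "act x r - act (p x) r = act (x - p x) r"
      using rmod_act_diff[OF m xr(1) _ xr(2), of "p x"] p[OF xr(1)] sA by auto
    then have "act x r - act (p x) r \<in> B" using mB p xr unfolding rmod_def by metis
    ultimately show "p (act x r) = act (p x) r" by (rule p_eqI)
  qed
  moreover have p_id: "p a = a" if "a \<in> A" for a
    using that sA mB by (intro p_eqI) (auto simp: rmod_def)
  moreover have "p ` C = A"
  proof
    show "p ` C \<subseteq> A" using p by auto
    show "A \<subseteq> p ` C" using sA p_id by (metis image_eqI subsetD subsetI)
  qed
  ultimately show ?thesis by blast
qed

text \<open>A homomorphism \<open>h : M\<^sup>n \<rightarrow> M\<close> has the same kernel as the endomorphism of
  \<open>M\<^sup>n\<close> that writes \<open>h v\<close> into the first coordinate.\<close>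
lemma rickart_dsum_kernel_dsummand:
  assumes m: "rmod Rc mul one act C" and n: "n > 0"
    and ric: "rickart Rc mul one (dact act) (dsum n C)"
    and h: "rhom Rc (dact act) (dsum n C) act C h"
  shows "dsummand Rc mul one (dact act) (dsum n C) (kernel (dsum n C) h)"
proof -
  have md: "rmod Rc mul one (dact act) (dsum n C)" by (rule rmod_dsum[OF m])
  define \<Phi> where "\<Phi> v = (if v \<in> dsum n C then (\<lambda>j::nat. if j = 0 then h v else 0) else 0)" for v
  have \<Phi>: "\<Phi> \<in> endos Rc (dact act) (dsum n C)"
    unfolding endos_def rhom_def mem_Collect_eq
  proof (intro conjI ballI allI impI)
    fix x assume "x \<in> dsum n C"
    then show "\<Phi> x \<in> dsum n C"
      using h n m unfolding \<Phi>_def rhom_def rmod_def by (auto simp: dsum_mem_iff)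
  next
    fix x y assume "x \<in> dsum n C" "y \<in> dsum n C"
    then show "\<Phi> (x + y) = \<Phi> x + \<Phi> y"
      using md h unfolding \<Phi>_def rhom_def rmod_def by (auto simp: fun_eq_iff)
  next
    fix x r assume "x \<in> dsum n C" "r \<in> Rc"
    then show "\<Phi> (dact act x r) = dact act (\<Phi> x) r"
      using md h rmod_act_zero[OF m] unfolding \<Phi>_def rhom_def rmod_def dact_def
      by (auto simp: fun_eq_iff)
  qed (simp add: \<Phi>_def)
  have "kernel (dsum n C) \<Phi> = kernel (dsum n C) h"
    unfolding kernel_def \<Phi>_def by (auto simp: fun_eq_iff)
  moreover have "dsummand Rc mul one (dact act) (dsum n C) (kernel (dsum n C) \<Phi>)"
    using ric \<Phi> unfolding rickart_def by blast
  ultimately show ?thesis by simp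
qed

lemma fin_sigma_rickart_kernel_retract:
  assumes m: "rmod Rc mul one act C" and fsr: "fin_sigma_rickart Rc mul one act C"
    and h: "rhom Rc (dact act) (dsum n C) act C h"
  shows "\<exists>p. rhom Rc (dact act) (dsum n C) (dact act) (dsum n C) p
    \<and> p ` dsum n C = kernel (dsum n C) h \<and> (\<forall>v\<in>kernel (dsum n C) h. p v = v)"
proof (cases "n = 0")
  case True
  have md: "rmod Rc mul one (dact act) (dsum n C)" by (rule rmod_dsum[OF m])
  have "dsum n C = {0}" using True m unfolding dsum_def rmod_def by (auto simp: fun_eq_iff)
  moreover have "h 0 = 0" by (rule rhom_zero[OF md h])
  moreover have "rhom Rc (dact act) (dsum n C) (dact act) (dsum n C) id"
    using md unfolding rhom_def rmod_def by auto
  ultimately show ?thesis by (intro exI[of _ id]) (auto simp: kernel_def)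
next
  case False
  then have "rickart Rc mul one (dact act) (dsum n C)"
    using fsr unfolding fin_sigma_rickart_def by blast
  with False show ?thesis
    using dsummand_retraction[OF rmod_dsum[OF m] rickart_dsum_kernel_dsummand[OF m _ _ h]]
    by blast
qed

lemma fin_sigma_rickart_M_coherent:
  assumes m: "rmod Rc mul one act M" and fsr: "fin_sigma_rickart Rc mul one act M"
    and N: "submod Rc mul one act N M" and gen: "fin_M_gen Rc act M act N"
  shows "M_coherent Rc act M act N"
  unfolding M_coherent_def
proof (intro conjI allI impI gen)
  fix n :: nat and \<rho> assume n: "n > 0" and \<rho>: "rhom Rc (dact act) (dsum n M) act N \<rho>"
  then have "rhom Rc (dact act) (dsum n M) act M \<rho>"
    using N unfolding rhom_def submod_def by blast
  then obtain p where p: "rhom Rc (dact act) (dsum n M) (dact act) (dsum n M) p"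
    and img: "p ` dsum n M = kernel (dsum n M) \<rho>"
    using fin_sigma_rickart_kernel_retract[OF m fsr] by blast
  then have "rhom Rc (dact act) (dsum n M) (dact act) (kernel (dsum n M) \<rho>) p"
    unfolding rhom_def by blast
  with img n show "fin_M_gen Rc act M (dact act) (kernel (dsum n M) \<rho>)"
    unfolding fin_M_gen_def by blast
qed

section \<open>Right ideals with a split presentation\<close>

locale ring_carrier =
  fixes Rc :: "'r::ab_group_add set" and mul :: "'r \<Rightarrow> 'r \<Rightarrow> 'r" and one :: 'r
  assumes zero_mem: "0 \<in> Rc"
    and add_mem: "a \<in> Rc \<Longrightarrow> b \<in> Rc \<Longrightarrow> a + b \<in> Rc"
    and uminus_mem: "a \<in> Rc \<Longrightarrow> - a \<in> Rc"
    and mul_mem: "a \<in> Rc \<Longrightarrow> b \<in> Rc \<Longrightarrow> mul a b \<in> Rc"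
    and one_mem: "one \<in> Rc"
    and mul_assoc: "a \<in> Rc \<Longrightarrow> b \<in> Rc \<Longrightarrow> c \<in> Rc \<Longrightarrow> mul (mul a b) c = mul a (mul b c)"
    and distrib_left: "a \<in> Rc \<Longrightarrow> b \<in> Rc \<Longrightarrow> c \<in> Rc \<Longrightarrow> mul a (b + c) = mul a b + mul a c"
    and distrib_right: "a \<in> Rc \<Longrightarrow> b \<in> Rc \<Longrightarrow> c \<in> Rc \<Longrightarrow> mul (a + b) c = mul a c + mul b c"
    and mul_one_left: "a \<in> Rc \<Longrightarrow> mul one a = a"
    and mul_one_right: "a \<in> Rc \<Longrightarrow> mul a one = a"
begin

lemma diff_mem: "a \<in> Rc \<Longrightarrow> b \<in> Rc \<Longrightarrow> a - b \<in> Rc"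
  by (simp only: diff_conv_add_uminus add_mem uminus_mem)

lemma sum_mem: "(\<And>i. i \<in> A \<Longrightarrow> g i \<in> Rc) \<Longrightarrow> sum g A \<in> Rc"
  by (induction A rule: infinite_finite_induct) (auto simp: zero_mem add_mem)

lemma mul_zero_left: "a \<in> Rc \<Longrightarrow> mul 0 a = 0"
  using distrib_right[of 0 0 a] zero_mem by simp

lemma mul_zero_right: "a \<in> Rc \<Longrightarrow> mul a 0 = 0"
  using distrib_left[of a 0 0] zero_mem by simp

lemma mul_diff_left: "a \<in> Rc \<Longrightarrow> b \<in> Rc \<Longrightarrow> c \<in> Rc \<Longrightarrow> mul (a - b) c = mul a c - mul b c"
  using distrib_right[of "a - b" b c] diff_mem by (simp add: eq_diff_eq)

lemma mul_diff_right: "a \<in> Rc \<Longrightarrow> b \<in> Rc \<Longrightarrow> c \<in> Rc \<Longrightarrow> mul a (b - c) = mul a b - mul a c"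
  using distrib_left[of a "b - c" c] diff_mem by (simp add: eq_diff_eq)

lemma mul_sum_left:
  "(\<And>i. i \<in> A \<Longrightarrow> g i \<in> Rc) \<Longrightarrow> c \<in> Rc \<Longrightarrow> mul (sum g A) c = (\<Sum>i\<in>A. mul (g i) c)"
  by (induction A rule: infinite_finite_induct) (auto simp: mul_zero_left distrib_right sum_mem)

lemma mul_sum_right:
  "(\<And>i. i \<in> A \<Longrightarrow> g i \<in> Rc) \<Longrightarrow> a \<in> Rc \<Longrightarrow> mul a (sum g A) = (\<Sum>i\<in>A. mul a (g i))"
  by (induction A rule: infinite_finite_induct) (auto simp: mul_zero_right distrib_left sum_mem)

lemma free_mod_iff:
  "finite X \<Longrightarrow> v \<in> free_mod Rc X \<longleftrightarrow> (\<forall>i\<in>X. v i \<in> Rc) \<and> (\<forall>i. i \<notin> X \<longrightarrow> v i = 0)"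
  unfolding free_mod_def by (auto intro: finite_subset[of "{i. v i \<noteq> 0}" X])

lemma free_mod_coord: "v \<in> free_mod Rc X \<Longrightarrow> v i \<in> Rc"
  unfolding free_mod_def using zero_mem by (cases "i \<in> X") auto

lemma free_act_apply: "free_act mul X v r i = (if i \<in> X then mul (v i) r else 0)"
  unfolding free_act_def by simp

context
  fixes X :: "'i set"
  assumes X: "finite X"
begin

lemma free_mod_zero: "0 \<in> free_mod Rc X"
  using X zero_mem by (simp add: free_mod_iff)

lemma free_mod_add: "v \<in> free_mod Rc X \<Longrightarrow> w \<in> free_mod Rc X \<Longrightarrow> v + w \<in> free_mod Rc X"
  using X by (simp add: free_mod_iff add_mem)

lemma free_mod_diff: "v \<in> free_mod Rc X \<Longrightarrow> w \<in> free_mod Rc X \<Longrightarrow> v - w \<in> free_mod Rc X"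
  using X by (simp add: free_mod_iff diff_mem)

lemma free_mod_sum: "(\<And>j. j \<in> A \<Longrightarrow> w j \<in> free_mod Rc X) \<Longrightarrow> sum w A \<in> free_mod Rc X"
  by (induction A rule: infinite_finite_induct) (auto simp: free_mod_zero free_mod_add)

lemma free_mod_act:
  "v \<in> free_mod Rc X \<Longrightarrow> r \<in> Rc \<Longrightarrow> free_act mul X v r \<in> free_mod Rc X"
  using X by (simp add: free_mod_iff free_act_apply mul_mem)

lemma free_act_diff:
  "v \<in> free_mod Rc X \<Longrightarrow> w \<in> free_mod Rc X \<Longrightarrow> r \<in> Rc
   \<Longrightarrow> free_act mul X (v - w) r = free_act mul X v r - free_act mul X w r"
  by (auto simp: fun_eq_iff free_act_apply mul_diff_left free_mod_coord)

end

end

context ring_carrier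
begin

definition lincomb :: "'r list \<Rightarrow> (nat \<Rightarrow> 'r) \<Rightarrow> 'r" where
  "lincomb xs v = (\<Sum>i<length xs. mul (xs ! i) (v i))"

definition unit_vec :: "nat \<Rightarrow> nat \<Rightarrow> 'r" where
  "unit_vec j = (\<lambda>i. if i = j then one else 0)"

text \<open>\<open>projective\<close> asks for a free module indexed by a set of ring elements, so
  coefficients indexed by list positions are summed over repeated entries of the list.\<close>
definition collapse :: "'r list \<Rightarrow> (nat \<Rightarrow> 'r) \<Rightarrow> 'r \<Rightarrow> 'r" where
  "collapse xs w = (\<lambda>h. if h \<in> set xs then \<Sum>i\<in>{i\<in>{..<length xs}. xs ! i = h}. w i else 0)"

definition setcomb :: "'r set \<Rightarrow> ('r \<Rightarrow> 'r) \<Rightarrow> 'r" where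
  "setcomb X v = (\<Sum>h\<in>X. mul h (v h))"

lemma lincomb_mem:
  "set xs \<subseteq> Rc \<Longrightarrow> (\<And>i. i < length xs \<Longrightarrow> v i \<in> Rc) \<Longrightarrow> lincomb xs v \<in> Rc"
  unfolding lincomb_def by (auto intro!: sum_mem mul_mem)

end

locale presentation_splitting = ring_carrier +
  fixes xs q
  assumes gens_mem: "set xs \<subseteq> Rc"
    and q_mem: "v \<in> free_mod Rc {..<length xs} \<Longrightarrow> q v \<in> free_mod Rc {..<length xs}"
    and q_add: "v \<in> free_mod Rc {..<length xs} \<Longrightarrow> w \<in> free_mod Rc {..<length xs}
      \<Longrightarrow> q (v + w) = q v + q w"
    and q_scale: "v \<in> free_mod Rc {..<length xs} \<Longrightarrow> r \<in> Rc
      \<Longrightarrow> q (free_act mul {..<length xs} v r) = free_act mul {..<length xs} (q v) r"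
    and lincomb_q: "v \<in> free_mod Rc {..<length xs} \<Longrightarrow> lincomb xs (q v) = lincomb xs v"
    and q_kernel: "v \<in> free_mod Rc {..<length xs} \<Longrightarrow> lincomb xs v = 0 \<Longrightarrow> q v = 0"
begin

abbreviation "n \<equiv> length xs"
abbreviation "Free \<equiv> free_mod Rc {..<n}"
abbreviation "scale \<equiv> free_act mul {..<n}"

lemma gen_mem: "i < n \<Longrightarrow> xs ! i \<in> Rc"
  using gens_mem by auto

lemma Free_iff: "v \<in> Free \<longleftrightarrow> (\<forall>i<n. v i \<in> Rc) \<and> (\<forall>i\<ge>n. v i = 0)"
  by (auto simp: free_mod_iff not_less)

lemma Free_zero: "0 \<in> Free"
  by (simp add: free_mod_zero)

lemma Free_add: "v \<in> Free \<Longrightarrow> w \<in> Free \<Longrightarrow> v + w \<in> Free"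
  by (simp add: free_mod_add)

lemma Free_diff: "v \<in> Free \<Longrightarrow> w \<in> Free \<Longrightarrow> v - w \<in> Free"
  by (simp add: free_mod_diff)

lemma Free_scale: "v \<in> Free \<Longrightarrow> r \<in> Rc \<Longrightarrow> scale v r \<in> Free"
  by (simp add: free_mod_act)

lemma Free_sum: "(\<And>j. j \<in> A \<Longrightarrow> w j \<in> Free) \<Longrightarrow> sum w A \<in> Free"
  by (simp add: free_mod_sum)

lemma lincomb_add: "v \<in> Free \<Longrightarrow> w \<in> Free \<Longrightarrow> lincomb xs (v + w) = lincomb xs v + lincomb xs w"
  unfolding lincomb_def by (simp add: distrib_left gen_mem free_mod_coord sum.distrib)

lemma lincomb_diff: "v \<in> Free \<Longrightarrow> w \<in> Free \<Longrightarrow> lincomb xs (v - w) = lincomb xs v - lincomb xs w"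
  unfolding lincomb_def by (simp add: mul_diff_right gen_mem free_mod_coord sum_subtractf)

lemma lincomb_act:
  assumes v: "v \<in> Free" and r: "r \<in> Rc"
  shows "lincomb xs (scale v r) = mul (lincomb xs v) r"
proof -
  have "mul (lincomb xs v) r = (\<Sum>i<n. mul (mul (xs ! i) (v i)) r)"
    unfolding lincomb_def using v r by (intro mul_sum_left) (auto intro: mul_mem gen_mem free_mod_coord)
  also have "\<dots> = (\<Sum>i<n. mul (xs ! i) (mul (v i) r))"
    using v r by (intro sum.cong) (auto simp: mul_assoc gen_mem free_mod_coord)
  finally show ?thesis unfolding lincomb_def by (simp add: free_act_apply)
qed

lemma lincomb_zero: "lincomb xs 0 = 0"
  unfolding lincomb_def by (simp add: mul_zero_right gen_mem)

lemma lincomb_sum: "(\<And>j. j \<in> A \<Longrightarrow> w j \<in> Free) \<Longrightarrow> lincomb xs (sum w A) = (\<Sum>j\<in>A. lincomb xs (w j))"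
  by (induction A rule: infinite_finite_induct) (auto simp: lincomb_zero lincomb_add Free_sum)

lemma q_diff: "v \<in> Free \<Longrightarrow> w \<in> Free \<Longrightarrow> q (v - w) = q v - q w"
  using q_add[of "v - w" w] Free_diff by (simp add: eq_diff_eq)

lemma q_zero: "q 0 = 0"
  using q_kernel Free_zero lincomb_zero by simp

lemma q_sum: "(\<And>j. j \<in> A \<Longrightarrow> w j \<in> Free) \<Longrightarrow> q (sum w A) = (\<Sum>j\<in>A. q (w j))"
  by (induction A rule: infinite_finite_induct) (auto simp: q_zero q_add Free_sum)

lemma q_cong: "v \<in> Free \<Longrightarrow> w \<in> Free \<Longrightarrow> lincomb xs v = lincomb xs w \<Longrightarrow> q v = q w"
  using q_kernel[of "v - w"] by (simp add: Free_diff lincomb_diff q_diff)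

lemma unit_vec_mem: "j < n \<Longrightarrow> unit_vec j \<in> Free"
  unfolding Free_iff unit_vec_def using one_mem zero_mem by auto

lemma free_expansion: "v \<in> Free \<Longrightarrow> (\<Sum>j<n. scale (unit_vec j) (v j)) = v"
proof (rule ext)
  fix i assume v: "v \<in> Free"
  show "(\<Sum>j<n. scale (unit_vec j) (v j)) i = v i"
  proof (cases "i < n")
    case True
    then have "(\<Sum>j<n. scale (unit_vec j) (v j)) i = (\<Sum>j<n. if j = i then mul one (v i) else 0)"
      unfolding sum_apply free_act_apply
      by (intro sum.cong) (auto simp: unit_vec_def mul_zero_left free_mod_coord[OF v])
    with True show ?thesis by (simp add: mul_one_left free_mod_coord[OF v])
  next
    case False
    with v show ?thesis by (simp add: sum_apply free_act_apply Free_iff)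
  qed
qed

lemma collapse_mem:
  assumes w: "w \<in> Free"
  shows "collapse xs w \<in> free_mod Rc (set xs)"
proof -
  have "w i \<in> Rc" for i using free_mod_coord[OF w] .
  then show ?thesis unfolding collapse_def by (auto simp: free_mod_iff intro!: sum_mem)
qed

lemma collapse_add: "collapse xs (v + w) = collapse xs v + collapse xs w"
  unfolding collapse_def by (auto simp: fun_eq_iff sum.distrib)

lemma collapse_scale:
  assumes w: "w \<in> Free" and r: "r \<in> Rc"
  shows "collapse xs (scale w r) = free_act mul (set xs) (collapse xs w) r"
proof (rule ext)
  fix h
  have "(\<Sum>i\<in>{i\<in>{..<n}. xs ! i = h}. mul (w i) r) = mul (\<Sum>i\<in>{i\<in>{..<n}. xs ! i = h}. w i) r"
    using w r by (intro mul_sum_left[symmetric]) (auto intro: free_mod_coord)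
  then show "collapse xs (scale w r) h = free_act mul (set xs) (collapse xs w) r h"
    unfolding collapse_def free_act_apply by auto
qed

lemma setcomb_collapse:
  assumes w: "w \<in> Free"
  shows "setcomb (set xs) (collapse xs w) = lincomb xs w"
proof -
  have "setcomb (set xs) (collapse xs w) = (\<Sum>h\<in>set xs. \<Sum>i\<in>{i\<in>{..<n}. xs ! i = h}. mul h (w i))"
    unfolding setcomb_def collapse_def using gens_mem free_mod_coord[OF w]
    by (intro sum.cong refl) (auto intro!: mul_sum_right)
  also have "\<dots> = (\<Sum>h\<in>set xs. \<Sum>i\<in>{i\<in>{..<n}. xs ! i = h}. mul (xs ! i) (w i))"
    by (intro sum.cong refl) auto
  also have "\<dots> = lincomb xs w"
    unfolding lincomb_def by (rule sum.group) auto
  finally show ?thesis .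
qed

definition kernel_gens :: "(nat \<Rightarrow> 'a) list" where
  "kernel_gens = map (\<lambda>j. unit_vec j - q (unit_vec j)) [0..<n]"

lemma length_kernel_gens [simp]: "length kernel_gens = n"
  unfolding kernel_gens_def by simp

lemma kernel_gens_nth: "i < n \<Longrightarrow> kernel_gens ! i = unit_vec i - q (unit_vec i)"
  unfolding kernel_gens_def by simp

lemma kernel_gens_mem: "i < n \<Longrightarrow> kernel_gens ! i \<in> kernel Free (lincomb xs)"
  unfolding kernel_def kernel_gens_nth
  by (simp add: unit_vec_mem q_mem Free_diff lincomb_diff lincomb_q)

text \<open>The kernel of \<open>lincomb xs\<close> is the image of the idempotent \<open>v \<mapsto> v - q v\<close>,
  so it is generated by the images of the unit vectors.\<close>
lemma kernel_lincomb_eq: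
  "kernel Free (lincomb xs) =
     {\<Sum>i<length kernel_gens. scale (kernel_gens ! i) (rs i) |rs. \<forall>i<length kernel_gens. rs i \<in> Rc}"
proof (intro equalityI subsetI)
  fix u assume "u \<in> kernel Free (lincomb xs)"
  then have u: "u \<in> Free" "lincomb xs u = 0" unfolding kernel_def by auto
  have terms: "scale (unit_vec i) (u i) \<in> Free" if "i < n" for i
    using that u by (intro Free_scale unit_vec_mem free_mod_coord)
  have "(\<Sum>i<n. scale (kernel_gens ! i) (u i))
      = (\<Sum>i<n. scale (unit_vec i) (u i) - q (scale (unit_vec i) (u i)))"
    using u by (intro sum.cong) (auto simp: kernel_gens_nth free_act_diff unit_vec_mem q_mem
        q_scale free_mod_coord)
  also have "\<dots> = u - q u"
    using terms q_sum[of "{..<n}" "\<lambda>i. scale (unit_vec i) (u i)"]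
    by (simp add: sum_subtractf free_expansion[OF u(1)])
  also have "\<dots> = u" using q_kernel u by simp
  finally have "u = (\<Sum>i<n. scale (kernel_gens ! i) (u i))" ..
  moreover have "\<forall>i<n. u i \<in> Rc" using free_mod_coord[OF u(1)] by blast
  ultimately show "u \<in> {\<Sum>i<length kernel_gens. scale (kernel_gens ! i) (rs i) |rs.
      \<forall>i<length kernel_gens. rs i \<in> Rc}"
    by auto
next
  fix u assume "u \<in> {\<Sum>i<length kernel_gens. scale (kernel_gens ! i) (rs i) |rs.
      \<forall>i<length kernel_gens. rs i \<in> Rc}"
  then obtain rs where rs: "\<forall>i<n. rs i \<in> Rc" and u: "u = (\<Sum>i<n. scale (kernel_gens ! i) (rs i))"
    by auto
  have terms: "scale (kernel_gens ! i) (rs i) \<in> Free \<and> lincomb xs (scale (kernel_gens ! i) (rs i)) = 0"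
    if "i < n" for i
    using kernel_gens_mem[OF that] rs that
    by (auto simp: kernel_def Free_scale lincomb_act mul_zero_left)
  then have "u \<in> Free" unfolding u by (intro Free_sum) auto
  moreover have "lincomb xs u = 0" unfolding u using terms by (subst lincomb_sum) auto
  ultimately show "u \<in> kernel Free (lincomb xs)" unfolding kernel_def by blast
qed

text \<open>The choice of preimage is irrelevant: \<open>q v\<close> depends only on \<open>lincomb xs v\<close>.\<close>
definition section_map :: "'a \<Rightarrow> 'a \<Rightarrow> 'a" where
  "section_map g = collapse xs (q (SOME v. v \<in> Free \<and> lincomb xs v = g))"

context
  fixes I
  assumes ideal: "right_ideal Rc mul one I"
    and gens_in: "set xs \<subseteq> I"
    and span: "I = {\<Sum>i<n. mul (xs ! i) (rs i) |rs. \<forall>i<n. rs i \<in> Rc}"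
begin

lemma rmod_ideal: "rmod Rc mul one mul I"
  using ideal unfolding right_ideal_def by blast

lemma lincomb_image: "lincomb xs ` Free = I"
proof (intro equalityI subsetI)
  fix g assume "g \<in> lincomb xs ` Free"
  then show "g \<in> I" unfolding span lincomb_def by (auto intro: free_mod_coord)
next
  fix g assume "g \<in> I"
  then obtain rs where rs: "\<forall>i<n. rs i \<in> Rc" and g: "g = (\<Sum>i<n. mul (xs ! i) (rs i))"
    unfolding span by blast
  define v where "v i = (if i < n then rs i else 0)" for i
  have "v \<in> Free" unfolding Free_iff v_def using rs by simp
  moreover have "lincomb xs v = g" unfolding lincomb_def g v_def by simp
  ultimately show "g \<in> lincomb xs ` Free" by blast
qed

lemma lincomb_rhom: "rhom Rc scale Free mul I (lincomb xs)"
  unfolding rhom_def using lincomb_image by (auto simp: lincomb_add lincomb_act)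

lemma fin_pres_ideal: "fin_pres Rc mul one mul I"
  unfolding fin_pres_def fgen_def
proof (intro conjI exI)
  show "set kernel_gens \<subseteq> kernel Free (lincomb xs)"
    using kernel_gens_mem by (auto simp: in_set_conv_nth kernel_gens_def)
qed (use rmod_ideal lincomb_rhom lincomb_image kernel_lincomb_eq in auto)

lemma section_map:
  assumes g: "g \<in> I"
  obtains v where "v \<in> Free" "lincomb xs v = g" "section_map g = collapse xs (q v)"
proof -
  have "\<exists>v. v \<in> Free \<and> lincomb xs v = g" using g lincomb_image by blast
  then have "(SOME v. v \<in> Free \<and> lincomb xs v = g) \<in> Free \<and>
      lincomb xs (SOME v. v \<in> Free \<and> lincomb xs v = g) = g"
    by (rule someI_ex)
  with that show ?thesis unfolding section_map_def by blast
qed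

lemma setcomb_section: "g \<in> I \<Longrightarrow> setcomb (set xs) (section_map g) = g"
  by (metis section_map setcomb_collapse q_mem lincomb_q)

lemma section_map_mem: "g \<in> I \<Longrightarrow> section_map g \<in> free_mod Rc (set xs)"
  by (metis section_map collapse_mem q_mem)

lemma section_map_rhom:
  "rhom Rc mul I (free_act mul (set xs)) (free_mod Rc (set xs)) section_map"
  unfolding rhom_def
proof (intro conjI ballI)
  fix g h assume "g \<in> I" "h \<in> I"
  then obtain v w where v: "v \<in> Free" "lincomb xs v = g" "section_map g = collapse xs (q v)"
    and w: "w \<in> Free" "lincomb xs w = h" "section_map h = collapse xs (q w)"
    by (metis section_map)
  obtain u where u: "u \<in> Free" "lincomb xs u = g + h" "section_map (g + h) = collapse xs (q u)"
    using rmod_ideal \<open>g \<in> I\<close> \<open>h \<in> I\<close> section_map unfolding rmod_def by metis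
  have "q u = q (v + w)" using u v w by (intro q_cong) (auto simp: Free_add lincomb_add)
  then show "section_map (g + h) = section_map g + section_map h"
    using u v w by (simp add: q_add collapse_add)
next
  fix g r assume "g \<in> I" "r \<in> Rc"
  then obtain v where v: "v \<in> Free" "lincomb xs v = g" "section_map g = collapse xs (q v)"
    by (metis section_map)
  obtain u where u: "u \<in> Free" "lincomb xs u = mul g r" "section_map (mul g r) = collapse xs (q u)"
    using rmod_ideal \<open>g \<in> I\<close> \<open>r \<in> Rc\<close> section_map unfolding rmod_def by metis
  have "q u = q (scale v r)" using u v \<open>r \<in> Rc\<close> by (intro q_cong) (auto simp: Free_scale lincomb_act)
  then show "section_map (mul g r) = free_act mul (set xs) (section_map g) r"
    using u v \<open>r \<in> Rc\<close> by (simp add: q_scale q_mem collapse_scale)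
qed (rule section_map_mem)

lemma setcomb_rhom: "rhom Rc (free_act mul (set xs)) (free_mod Rc (set xs)) mul I (setcomb (set xs))"
  unfolding rhom_def
proof (intro conjI ballI)
  fix v assume v: "v \<in> free_mod Rc (set xs)"
  have "mul h (v h) \<in> I" if "h \<in> set xs" for h
    using that gens_in rmod_ideal free_mod_coord[OF v] unfolding rmod_def by blast
  then show "setcomb (set xs) v \<in> I"
    unfolding setcomb_def by (intro rmod_sum_mem[OF rmod_ideal])
next
  fix v w assume v: "v \<in> free_mod Rc (set xs)" and w: "w \<in> free_mod Rc (set xs)"
  have distr: "mul h ((v + w) h) = mul h (v h) + mul h (w h)" if "h \<in> set xs" for h
    using that gens_mem free_mod_coord[OF v] free_mod_coord[OF w]
    by (simp add: distrib_left subset_iff)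
  show "setcomb (set xs) (v + w) = setcomb (set xs) v + setcomb (set xs) w"
    unfolding setcomb_def sum.distrib[symmetric] by (intro sum.cong refl distr)
next
  fix v r assume v: "v \<in> free_mod Rc (set xs)" and r: "r \<in> Rc"
  have "mul (setcomb (set xs) v) r = (\<Sum>h\<in>set xs. mul (mul h (v h)) r)"
    unfolding setcomb_def using gens_mem v r
    by (intro mul_sum_left) (auto intro: mul_mem free_mod_coord)
  also have "\<dots> = setcomb (set xs) (free_act mul (set xs) v r)"
    unfolding setcomb_def using gens_mem v r
    by (intro sum.cong) (auto simp: free_act_apply mul_assoc free_mod_coord)
  finally show "setcomb (set xs) (free_act mul (set xs) v r) = mul (setcomb (set xs) v) r" ..
qed

lemma projective_ideal: "projective Rc mul one mul I"
  unfolding projective_def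
proof (intro conjI exI ballI)
  show "setcomb (set xs) ` free_mod Rc (set xs) = I"
    using setcomb_rhom setcomb_section section_map_mem unfolding rhom_def by force
qed (use rmod_ideal setcomb_rhom section_map_rhom setcomb_section in auto)

end

end

section \<open>The endomorphism ring of a finite \<open>\<Sigma>\<close>-Rickart module\<close>

locale endo_ring =
  fixes Rc :: "'r::ab_group_add set" and mul :: "'r \<Rightarrow> 'r \<Rightarrow> 'r" and one :: 'r
    and act :: "'m::ab_group_add \<Rightarrow> 'r \<Rightarrow> 'm" and M :: "'m set"
  assumes module: "rmod Rc mul one act M"
begin

abbreviation "S \<equiv> endos Rc act M"

lemma M_zero: "0 \<in> M"
  using module unfolding rmod_def by blast

lemma M_add: "x \<in> M \<Longrightarrow> y \<in> M \<Longrightarrow> x + y \<in> M"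
  using module unfolding rmod_def by blast

lemma M_act: "x \<in> M \<Longrightarrow> r \<in> Rc \<Longrightarrow> act x r \<in> M"
  using module unfolding rmod_def by blast

lemma act_add: "x \<in> M \<Longrightarrow> y \<in> M \<Longrightarrow> r \<in> Rc \<Longrightarrow> act (x + y) r = act x r + act y r"
  using module unfolding rmod_def by blast

lemma act_uminus: "x \<in> M \<Longrightarrow> r \<in> Rc \<Longrightarrow> act (- x) r = - act x r"
  using rmod_act_diff[OF module M_zero, of x r] rmod_act_zero[OF module] by simp

lemma endo_mem: "f \<in> S \<Longrightarrow> f x \<in> M"
  unfolding endos_def rhom_def using M_zero by (cases "x \<in> M") auto

lemma endo_out: "f \<in> S \<Longrightarrow> x \<notin> M \<Longrightarrow> f x = 0"
  unfolding endos_def by blast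

lemma endo_add: "f \<in> S \<Longrightarrow> x \<in> M \<Longrightarrow> y \<in> M \<Longrightarrow> f (x + y) = f x + f y"
  unfolding endos_def rhom_def by blast

lemma endo_act: "f \<in> S \<Longrightarrow> x \<in> M \<Longrightarrow> r \<in> Rc \<Longrightarrow> f (act x r) = act (f x) r"
  unfolding endos_def rhom_def by blast

lemma endo_zero: "f \<in> S \<Longrightarrow> f 0 = 0"
  using rhom_zero[OF module] unfolding endos_def by blast

lemma ring_carrier_endos: "ring_carrier S (\<circ>) (end_one M)"
proof
  show "0 \<in> S"
    unfolding endos_def rhom_def using M_zero rmod_act_zero[OF module] by auto
  show "end_one M \<in> S"
    unfolding endos_def rhom_def end_one_def by (auto simp: M_add M_act)
  fix f g h assume f: "f \<in> S" and g: "g \<in> S" and h: "h \<in> S"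
  show "f + g \<in> S"
    using f g unfolding endos_def rhom_def by (auto simp: M_add act_add algebra_simps)
  show "- f \<in> S"
    using f rmod_act_zero[OF module] unfolding endos_def rhom_def
    by (auto simp: act_uminus rmod_def module[unfolded rmod_def])
  show "f \<circ> g \<in> S"
    using f g endo_zero[OF f] unfolding endos_def rhom_def by auto
  show "f \<circ> g \<circ> h = f \<circ> (g \<circ> h)" by (rule comp_assoc)
  show "f \<circ> (g + h) = (f \<circ> g) + (f \<circ> h)"
    using f g h by (auto simp: fun_eq_iff endo_add endo_mem)
  show "(f + g) \<circ> h = (f \<circ> h) + (g \<circ> h)" by (simp add: fun_eq_iff)
  show "end_one M \<circ> f = f"
    using f by (auto simp: fun_eq_iff end_one_def endo_mem)
  show "f \<circ> end_one M = f"
    using f by (auto simp: fun_eq_iff end_one_def endo_out endo_zero)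
qed

sublocale S: ring_carrier S "(\<circ>)" "end_one M"
  by (rule ring_carrier_endos)

definition row_map :: "('m \<Rightarrow> 'm) list \<Rightarrow> (nat \<Rightarrow> 'm) \<Rightarrow> 'm" where
  "row_map xs w = (\<Sum>i<length xs. (xs ! i) (w i))"

definition eval_vec :: "(nat \<Rightarrow> 'm \<Rightarrow> 'm) \<Rightarrow> 'm \<Rightarrow> nat \<Rightarrow> 'm" where
  "eval_vec v x = (\<lambda>j. v j x)"

text \<open>An endomorphism \<open>e\<close> of \<open>M\<^sup>n\<close> acts on \<open>S\<^sup>n = Hom(M, M\<^sup>n)\<close> by composition.\<close>
definition lift_endo :: "((nat \<Rightarrow> 'm) \<Rightarrow> nat \<Rightarrow> 'm) \<Rightarrow> (nat \<Rightarrow> 'm \<Rightarrow> 'm) \<Rightarrow> nat \<Rightarrow> 'm \<Rightarrow> 'm"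
  where "lift_endo e v = (\<lambda>i x. if x \<in> M then e (eval_vec v x) i else 0)"

lemma lincomb_apply: "S.lincomb xs v x = row_map xs (eval_vec v x)"
  unfolding S.lincomb_def row_map_def eval_vec_def by (simp add: sum_apply)

lemma row_map_rhom:
  assumes "set xs \<subseteq> S"
  shows "rhom Rc (dact act) (dsum (length xs) M) act M (row_map xs)"
proof -
  have gen: "xs ! i \<in> S" if "i < length xs" for i using assms that by auto
  have coord: "w i \<in> M" if "w \<in> dsum (length xs) M" for w i
    using that dsum_coord M_zero by blast
  show ?thesis
    unfolding rhom_def
  proof (intro conjI ballI)
    fix w assume "w \<in> dsum (length xs) M"
    then show "row_map xs w \<in> M"
      unfolding row_map_def by (intro rmod_sum_mem[OF module] endo_mem gen) auto
  next
    fix w u assume "w \<in> dsum (length xs) M" "u \<in> dsum (length xs) M"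
    then show "row_map xs (w + u) = row_map xs w + row_map xs u"
      unfolding row_map_def by (simp add: endo_add gen coord sum.distrib)
  next
    fix w r assume w: "w \<in> dsum (length xs) M" and r: "r \<in> Rc"
    have "act (row_map xs w) r = (\<Sum>i<length xs. act ((xs ! i) (w i)) r)"
      unfolding row_map_def using r by (intro rmod_act_sum[OF module] endo_mem gen) auto
    then show "row_map xs (dact act w r) = act (row_map xs w) r"
      unfolding row_map_def dact_def using coord[OF w] r by (simp add: endo_act gen)
  qed
qed

context
  fixes xs :: "('m \<Rightarrow> 'm) list" and e :: "(nat \<Rightarrow> 'm) \<Rightarrow> nat \<Rightarrow> 'm"
  assumes gens: "set xs \<subseteq> S"
    and e_hom: "rhom Rc (dact act) (dsum (length xs) M) (dact act) (dsum (length xs) M) e"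
    and row_map_e: "w \<in> dsum (length xs) M \<Longrightarrow> row_map xs (e w) = row_map xs w"
    and e_kernel: "w \<in> dsum (length xs) M \<Longrightarrow> row_map xs w = 0 \<Longrightarrow> e w = 0"
begin

abbreviation "n \<equiv> length xs"
abbreviation "Free \<equiv> free_mod S {..<n}"

lemma Free_iff: "v \<in> Free \<longleftrightarrow> (\<forall>i<n. v i \<in> S) \<and> (\<forall>i\<ge>n. v i = 0)"
  by (auto simp: S.free_mod_iff not_less)

lemma Free_coord: "v \<in> Free \<Longrightarrow> v j \<in> S"
  by (rule S.free_mod_coord)

lemma eval_vec_mem: "v \<in> Free \<Longrightarrow> eval_vec v x \<in> dsum n M"
  unfolding eval_vec_def dsum_def Free_iff by (auto simp: endo_mem)

lemma e_mem: "w \<in> dsum n M \<Longrightarrow> e w \<in> dsum n M"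
  using e_hom unfolding rhom_def by blast

lemma e_coord: "w \<in> dsum n M \<Longrightarrow> e w i \<in> M"
  using e_mem dsum_coord M_zero by blast

lemma e_high: "w \<in> dsum n M \<Longrightarrow> n \<le> i \<Longrightarrow> e w i = 0"
  using e_mem unfolding dsum_def by blast

lemma e_add: "w \<in> dsum n M \<Longrightarrow> u \<in> dsum n M \<Longrightarrow> e (w + u) = e w + e u"
  using e_hom unfolding rhom_def by blast

lemma e_act: "w \<in> dsum n M \<Longrightarrow> r \<in> Rc \<Longrightarrow> e (dact act w r) = dact act (e w) r"
  using e_hom unfolding rhom_def by blast

lemma lift_endo_mem:
  assumes v: "v \<in> Free"
  shows "lift_endo e v \<in> Free"
  unfolding Free_iff[of "lift_endo e v"]
proof (intro conjI allI impI)
  fix i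
  have ev: "eval_vec v (x + y) = eval_vec v x + eval_vec v y" if "x \<in> M" "y \<in> M" for x y
    using Free_coord[OF v] that unfolding eval_vec_def by (simp add: fun_eq_iff endo_add)
  have ea: "eval_vec v (act x r) = dact act (eval_vec v x) r" if "x \<in> M" "r \<in> Rc" for x r
    using Free_coord[OF v] that unfolding eval_vec_def dact_def by (simp add: fun_eq_iff endo_act)
  show "lift_endo e v i \<in> S"
    unfolding endos_def rhom_def mem_Collect_eq
  proof (intro conjI ballI allI impI)
    fix x y assume "x \<in> M" "y \<in> M"
    then show "lift_endo e v i (x + y) = lift_endo e v i x + lift_endo e v i y"
      by (simp add: lift_endo_def M_add ev e_add eval_vec_mem v)
  next
    fix x r assume "x \<in> M" "r \<in> Rc"
    then show "lift_endo e v i (act x r) = act (lift_endo e v i x) r"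
      by (simp add: lift_endo_def M_act ea e_act eval_vec_mem v) (simp add: dact_def)
  qed (simp_all add: lift_endo_def e_coord eval_vec_mem v)
next
  fix i assume "n \<le> i"
  then show "lift_endo e v i = 0"
    unfolding lift_endo_def by (simp add: fun_eq_iff e_high eval_vec_mem v)
qed

lemma lift_endo_add: "v \<in> Free \<Longrightarrow> w \<in> Free \<Longrightarrow> lift_endo e (v + w) = lift_endo e v + lift_endo e w"
proof -
  assume "v \<in> Free" "w \<in> Free"
  moreover have ev: "eval_vec (v + w) x = eval_vec v x + eval_vec w x" for x
    unfolding eval_vec_def by (simp add: fun_eq_iff)
  ultimately show ?thesis
    unfolding lift_endo_def ev by (simp add: fun_eq_iff e_add eval_vec_mem)
qed

lemma lift_endo_scale:
  assumes v: "v \<in> Free" and r: "r \<in> S"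
  shows "lift_endo e (free_act (\<circ>) {..<n} v r) = free_act (\<circ>) {..<n} (lift_endo e v) r"
proof (intro ext)
  fix i x
  show "lift_endo e (free_act (\<circ>) {..<n} v r) i x = free_act (\<circ>) {..<n} (lift_endo e v) r i x"
  proof (cases "i < n")
    case True
    have e0: "e 0 = 0"
      using rhom_zero[OF rmod_dsum[OF module] e_hom] .
    have "eval_vec (free_act (\<circ>) {..<n} v r) x = eval_vec v (r x)"
      using v unfolding eval_vec_def Free_iff by (auto simp: fun_eq_iff S.free_act_apply)
    moreover have "eval_vec v 0 = 0"
      using Free_coord[OF v] unfolding eval_vec_def by (simp add: fun_eq_iff endo_zero)
    ultimately show ?thesis
      using True r unfolding lift_endo_def S.free_act_apply
      by (auto simp: endo_mem endo_out e0 M_zero)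
  next
    case False
    have "free_act (\<circ>) {..<n} v r \<in> Free" using v r by (simp add: S.free_mod_act)
    with False show ?thesis
      using lift_endo_mem Free_iff by (simp add: S.free_act_apply not_less)
  qed
qed

lemma lincomb_lift_endo: "v \<in> Free \<Longrightarrow> S.lincomb xs (lift_endo e v) = S.lincomb xs v"
proof (rule ext)
  fix x assume v: "v \<in> Free"
  have mem: "S.lincomb xs (lift_endo e v) \<in> S" "S.lincomb xs v \<in> S"
    using gens Free_coord lift_endo_mem[OF v] v by (auto intro: S.lincomb_mem)
  show "S.lincomb xs (lift_endo e v) x = S.lincomb xs v x"
  proof (cases "x \<in> M")
    case True
    then have "eval_vec (lift_endo e v) x = e (eval_vec v x)"
      unfolding eval_vec_def lift_endo_def by simp
    with True show ?thesis by (simp add: lincomb_apply row_map_e eval_vec_mem v)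
  next
    case False
    with mem show ?thesis by (simp add: endo_out)
  qed
qed

lemma lift_endo_kernel: "v \<in> Free \<Longrightarrow> S.lincomb xs v = 0 \<Longrightarrow> lift_endo e v = 0"
  unfolding lift_endo_def using e_kernel eval_vec_mem lincomb_apply
  by (auto simp: fun_eq_iff)

lemma presentation_splitting_lift_endo:
  "presentation_splitting S (\<circ>) (end_one M) xs (lift_endo e)"
  by unfold_locales (use gens in \<open>simp_all add: lift_endo_mem lift_endo_add lift_endo_scale
      lincomb_lift_endo lift_endo_kernel\<close>)

end

lemma presentation_splits:
  assumes fsr: "fin_sigma_rickart Rc mul one act M" and gens: "set xs \<subseteq> S"
  shows "\<exists>q. presentation_splitting S (\<circ>) (end_one M) xs q"
proof -
  let ?D = "dsum (length xs) M"
  have md: "rmod Rc mul one (dact act) ?D" by (rule rmod_dsum[OF module])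
  obtain p where p: "rhom Rc (dact act) ?D (dact act) ?D p"
    and img: "p ` ?D = kernel ?D (row_map xs)" and fix_ker: "\<forall>w\<in>kernel ?D (row_map xs). p w = w"
    using fin_sigma_rickart_kernel_retract[OF module fsr row_map_rhom[OF gens]] by blast
  have p_mem: "p w \<in> ?D" and row_p: "row_map xs (p w) = 0" if "w \<in> ?D" for w
    using img that unfolding kernel_def by auto
  define e where "e w = w - p w" for w
  have "rhom Rc (dact act) ?D (dact act) ?D e"
    unfolding rhom_def e_def
  proof (intro conjI ballI)
    fix w assume "w \<in> ?D"
    then show "w - p w \<in> ?D" using rmod_diff_mem[OF md] p_mem by blast
  next
    fix w u assume "w \<in> ?D" "u \<in> ?D"
    then show "w + u - p (w + u) = (w - p w) + (u - p u)"
      using p unfolding rhom_def by simp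
  next
    fix w r assume "w \<in> ?D" "r \<in> Rc"
    then show "dact act w r - p (dact act w r) = dact act (w - p w) r"
      using p rmod_act_diff[OF md] p_mem unfolding rhom_def by simp
  qed
  moreover have "row_map xs (e w) = row_map xs w" if "w \<in> ?D" for w
    using that rhom_diff[OF md row_map_rhom[OF gens]] p_mem row_p unfolding e_def by simp
  moreover have "e w = 0" if "w \<in> ?D" "row_map xs w = 0" for w
    using that fix_ker unfolding e_def kernel_def by simp
  ultimately show ?thesis
    using presentation_splitting_lift_endo[OF gens] by blast
qed

lemma fg_right_ideal_projective_fin_pres:
  assumes fsr: "fin_sigma_rickart Rc mul one act M"
    and ideal: "right_ideal S (\<circ>) (end_one M) I" and fg: "fgen S (\<circ>) I"
  shows "projective S (\<circ>) (end_one M) (\<circ>) I \<and> fin_pres S (\<circ>) (end_one M) (\<circ>) I"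
proof -
  obtain xs where xs: "set xs \<subseteq> I"
    and span: "I = {\<Sum>i<length xs. xs ! i \<circ> rs i |rs. \<forall>i<length xs. rs i \<in> S}"
    using fg unfolding fgen_def by blast
  have "set xs \<subseteq> S" using xs ideal unfolding right_ideal_def by blast
  then obtain q where split: "presentation_splitting S (\<circ>) (end_one M) xs q"
    using presentation_splits[OF fsr] by blast
  show ?thesis
    using presentation_splitting.projective_ideal[OF split ideal xs span]
      presentation_splitting.fin_pres_ideal[OF split ideal xs span] by blast
qed

end

theorem mainTheorem15:
  fixes act :: "'m::ab_group_add \<Rightarrow> 'r::ring_1 \<Rightarrow> 'm" and M :: "'m set"
  assumes "rmod UNIV (*) 1 act M"
    and "fin_sigma_rickart UNIV (*) 1 act M"
  shows "right_semihereditary (endos UNIV act M) (\<lambda>f g. f \<circ> g) (end_one M)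
       \<and> right_coherent (endos UNIV act M) (\<lambda>f g. f \<circ> g) (end_one M)
       \<and> (\<forall>N. submod UNIV (*) 1 act N M \<and> fin_M_gen UNIV act M act N
              \<longrightarrow> M_coherent UNIV act M act N)"
proof -
  interpret endo_ring UNIV "(*)" 1 act M by (rule endo_ring.intro) (fact assms(1))
  show ?thesis
    unfolding right_semihereditary_def right_coherent_def
    using fg_right_ideal_projective_fin_pres[OF assms(2)] fin_sigma_rickart_M_coherent[OF assms]
    by blast
qed

end
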